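(* Let $Q=(q_n)_{n\ge1}$ be a basic sequence that is infinite in limit, and suppose there exist constants $M$ and $t$ such that $\nu_{i+1}-\nu_i\le Mi$ for all $i>t$. Then for every $Q$-special sequence $F$ and every real $\psi>1$, $$D_n^*(y_F)<\psi\cdot\sqrt{2\lceil M+1\rceil}\cdot\left(2\lceil M+1\rceil+1\right)\cdot n^{-1/2}$$ for all sufficiently large $n$.
   Context: A basic sequence is a sequence $Q=(q_n)_{n\ge1}$ of integers with $q_n\ge 2$; it is infinite in limit if $q_n\to\infty$. $\mathbb{N}$ denotes the positive integers. For each positive integer $j$ let $\nu_j=\min\{N : q_m\ge 2j^2 \text{ for all } m\ge N\}$. Define $l_1=\max(\nu_2-1,1)$ and, recursively for $i\ge 2$, $l_i=\max\big(\min\{k\in\mathbb{N} : l_1+2l_2+\cdots+(i-1)l_{i-1}+ik\ge \nu_{i+1}-1\},1\big)$. Put $L_i=\sum_{j=1}^i jl_j$ (with $L_0=0$). Let $S_Q=\{(a,b,c)\in\mathbb{N}^3 : b\le l_a,\ c\le a\}$ and $\phi_Q(a,b,c)=L_{a-1}+(b-1)a+c$; $\phi_Q$ is a bijection $S_Q\to\mathbb{N}$. A $Q$-special sequence is a family of integers $F=(F_{(a,b,c)})_{(a,b,c)\in S_Q}$ with $F_{(a,b,1)}=0$ for all $(a,b,1)\in S_Q$ and $\frac{F_{(a,b,c)}}{q_{\phi_Q(a,b,c)}}\in\left[\frac{c-1}{a}-\frac{1}{2a^2},\frac{c-1}{a}+\frac{1}{2a^2}\right]$ for $(a,b,c)\in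 S_Q$ with $c>1$. For such $F$ put $E_{F,n}=F_{\phi_Q^{-1}(n)}$ and let $y_F$ be the sequence $\left(E_{F,n}/q_n\right)_{n=1}^\infty$. For a sequence $w=(w_1,w_2,\dots)$ in $[0,1)$, the star discrepancy is $D_n^*(w)=\sup_{0<\gamma\le1}\left|\frac{\#\{1\le k\le n: w_k\in[0,\gamma)\}}{n}-\gamma\right|$. *)

theory Defs
  imports "HOL-Analysis.Analysis"
begin

text \<open>A basic sequence q = (q_n)_{n>=1}; values at index 0 are irrelevant.\<close>
definition basic_seq :: "(nat \<Rightarrow> int) \<Rightarrow> bool" where
  "basic_seq q \<longleftrightarrow> (\<forall>n\<ge>1. q n \<ge> 2)"

definition infinite_in_limit :: "(nat \<Rightarrow> int) \<Rightarrow> bool" where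
  "infinite_in_limit q \<longleftrightarrow> filterlim q at_top sequentially"

definition nu :: "(nat \<Rightarrow> int) \<Rightarrow> nat \<Rightarrow> nat" where
  "nu q j = (LEAST N::nat. N \<ge> 1 \<and> (\<forall>m\<ge>N. q m \<ge> 2 * int j ^ 2))"

primrec lL :: "(nat \<Rightarrow> int) \<Rightarrow> nat \<Rightarrow> nat \<times> nat" where
  "lL q 0 = (0, 0)"
| "lL q (Suc i) =
    (let Lp = snd (lL q i);
         li = (if i = 0 then max (nu q 2 - 1) 1
               else max (LEAST k::nat. k \<ge> 1 \<and> Lp + Suc i * k \<ge> nu q (Suc i + 1) - 1) 1)
     in (li, Lp + Suc i * li))"

definition l_seq :: "(nat \<Rightarrow> int) \<Rightarrow> nat \<Rightarrow> nat" where
  "l_seq q i = fst (lL q i)"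

definition L_seq :: "(nat \<Rightarrow> int) \<Rightarrow> nat \<Rightarrow> nat" where
  "L_seq q i = snd (lL q i)"

definition S_Q :: "(nat \<Rightarrow> int) \<Rightarrow> (nat \<times> nat \<times> nat) set" where
  "S_Q q = {(a, b, c). a \<ge> 1 \<and> b \<ge> 1 \<and> c \<ge> 1 \<and> b \<le> l_seq q a \<and> c \<le> a}"

definition phi_Q :: "(nat \<Rightarrow> int) \<Rightarrow> nat \<times> nat \<times> nat \<Rightarrow> nat" where
  "phi_Q q s = (case s of (a, b, c) \<Rightarrow> L_seq q (a - 1) + (b - 1) * a + c)"

definition phi_Q_inv :: "(nat \<Rightarrow> int) \<Rightarrow> nat \<Rightarrow> nat \<times> nat \<times> nat" where
  "phi_Q_inv q n = (THE s. s \<in> S_Q q \<and> phi_Q q s = n)"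

definition Q_special :: "(nat \<Rightarrow> int) \<Rightarrow> (nat \<times> nat \<times> nat \<Rightarrow> int) \<Rightarrow> bool" where
  "Q_special q F \<longleftrightarrow>
     (\<forall>a b. (a, b, 1) \<in> S_Q q \<longrightarrow> F (a, b, 1) = 0) \<and>
     (\<forall>a b c. (a, b, c) \<in> S_Q q \<and> c > 1 \<longrightarrow>
        real_of_int (F (a, b, c)) / real_of_int (q (phi_Q q (a, b, c)))
          \<in> {(real c - 1) / real a - 1 / (2 * real a ^ 2) ..
             (real c - 1) / real a + 1 / (2 * real a ^ 2)})"

definition E_F :: "(nat \<Rightarrow> int) \<Rightarrow> (nat \<times> nat \<times> nat \<Rightarrow> int) \<Rightarrow> nat \<Rightarrow> int" where
  "E_F q F n = F (phi_Q_inv q n)"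

text \<open>y_F as a sequence indexed from 1.\<close>
definition y_F :: "(nat \<Rightarrow> int) \<Rightarrow> (nat \<times> nat \<times> nat \<Rightarrow> int) \<Rightarrow> nat \<Rightarrow> real" where
  "y_F q F n = real_of_int (E_F q F n) / real_of_int (q n)"

definition star_discrepancy :: "(nat \<Rightarrow> real) \<Rightarrow> nat \<Rightarrow> real" where
  "star_discrepancy w n =
     (SUP \<gamma>\<in>{0<..1}. \<bar>real (card {k \<in> {1..n}. w k \<in> {0..<\<gamma>}}) / real n - \<gamma>\<bar>)"

end

theory Submission
  imports Defs
begin

text \<open>
  The indices are grouped into blocks: block \<open>a\<close> consists of \<open>l\<^sub>a\<close> runs of length \<open>a\<close>, and
  on each run the \<open>Q\<close>-special condition puts \<open>y\<^sub>F\<close> within \<open>1/(2a\<^sup>2)\<close> of the pattern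
  \<open>0, 1/a, \<dots>, (a-1)/a\<close>. Such a run therefore has, for every \<open>\<gamma>\<close>, about \<open>a\<gamma>\<close> points in
  \<open>[0, \<gamma>)\<close>, with error at most 2, and a partial run errs by at most its length. Up to an
  index \<open>n\<close> in block \<open>a\<close> the counting error is thus at most \<open>2(l\<^sub>1 + \<dots> + l\<^sub>a) + a\<close>. The
  growth condition on \<open>\<nu>\<close> forces \<open>l\<^sub>a \<le> M + 1\<close> for large \<open>a\<close>, so the error is
  \<open>(2M + 3)a + O(1)\<close>, while \<open>a \<le> \<surd>(2n) + 1\<close> because \<open>L\<^sub>a\<^sub>-\<^sub>1 \<ge> a(a-1)/2\<close>. Dividing by \<open>n\<close>
  gives the bound; the factor \<open>\<psi> > 1\<close> absorbs the \<open>O(1)\<close> terms.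
\<close>

section \<open>Block structure of the index set\<close>

lemma L_seq_0 [simp]: "L_seq q 0 = 0"
  by (simp add: L_seq_def)

lemma L_seq_Suc: "L_seq q (Suc i) = L_seq q i + Suc i * l_seq q (Suc i)"
  by (simp add: l_seq_def L_seq_def Let_def)

lemma l_seq_Suc:
  "l_seq q (Suc i) = (if i = 0 then max (nu q 2 - 1) 1
     else max (LEAST k. k \<ge> 1 \<and> nu q (Suc (Suc i)) - 1 \<le> L_seq q i + Suc i * k) 1)"
  by (simp add: l_seq_def L_seq_def Let_def)

lemma l_seq_pos: "i \<ge> 1 \<Longrightarrow> l_seq q i \<ge> 1"
  by (cases i) (auto simp: l_seq_Suc)

lemma strict_mono_L_seq: "strict_mono (L_seq q)"
proof (rule strict_monoI_Suc)
  fix i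
  show "L_seq q i < L_seq q (Suc i)"
    using l_seq_pos[of "Suc i" q] by (simp add: L_seq_Suc)
qed

lemma L_seq_ge_triangular: "i * (i + 1) \<le> 2 * L_seq q i"
proof (induction i)
  case (Suc i)
  have "Suc i * 1 \<le> Suc i * l_seq q (Suc i)"
    using l_seq_pos[of "Suc i" q] by (intro mult_le_mono2) simp
  with Suc show ?case by (simp add: L_seq_Suc algebra_simps)
qed simp

lemma L_seq_block: "a \<ge> 1 \<Longrightarrow> L_seq q a = L_seq q (a - 1) + a * l_seq q a"
  by (cases a) (auto simp: L_seq_Suc)

lemma block_index_le:
  assumes "a \<ge> 1" "L_seq q (a - 1) < n" "n \<le> L_seq q a'"
  shows "a \<le> a'"
proof (rule ccontr)
  assume "\<not> a \<le> a'"
  then have "L_seq q a' \<le> L_seq q (a - 1)"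
    by (intro strict_mono_leD[OF strict_mono_L_seq]) auto
  with assms show False by linarith
qed

lemma block_exists:
  assumes "n \<ge> 1"
  obtains a where "a \<ge> 1" "L_seq q (a - 1) < n" "n \<le> L_seq q a"
proof -
  have "n * 2 \<le> n * (n + 1)" using assms by (intro mult_le_mono2) simp
  then have ex: "n \<le> L_seq q n" using L_seq_ge_triangular[of n q] by linarith
  define a where "a = (LEAST a. n \<le> L_seq q a)"
  have n_le: "n \<le> L_seq q a" unfolding a_def by (rule LeastI_ex) (use ex in blast)
  then have "a \<ge> 1" using assms by (cases a) auto
  moreover have "\<not> n \<le> L_seq q (a - 1)"
    unfolding a_def by (rule not_less_Least) (use \<open>a \<ge> 1\<close> in \<open>simp add: a_def\<close>)
  ultimately show thesis using n_le that by simp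
qed

lemma block_index_le_sqrt:
  assumes "a \<ge> 1" "L_seq q (a - 1) < n"
  shows "real a \<le> sqrt 2 * sqrt (real n) + 1"
proof -
  have "(a - 1) * (a - 1) \<le> (a - 1) * ((a - 1) + 1)" by simp
  also have "\<dots> \<le> 2 * L_seq q (a - 1)" by (rule L_seq_ge_triangular)
  also have "\<dots> \<le> 2 * n" using assms by simp
  finally have "real (a - 1) ^ 2 \<le> 2 * real n"
    by (simp add: power2_eq_square flip: of_nat_mult)
  then have "real (a - 1) \<le> sqrt (2 * real n)" by (rule real_le_rsqrt)
  with assms show ?thesis by (simp add: real_sqrt_mult)
qed

lemma phi_Q_block:
  assumes "(a, b, c) \<in> S_Q q"
  shows "L_seq q (a - 1) < phi_Q q (a, b, c)" "phi_Q q (a, b, c) \<le> L_seq q a"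
proof -
  from assms have a: "a \<ge> 1" "b \<ge> 1" "c \<ge> 1" "b \<le> l_seq q a" "c \<le> a"
    by (auto simp: S_Q_def)
  then show "L_seq q (a - 1) < phi_Q q (a, b, c)" by (simp add: phi_Q_def)
  have "(b - 1) * a + c \<le> b * a" using a by (cases b) auto
  also have "\<dots> \<le> a * l_seq q a" using a by simp
  finally show "phi_Q q (a, b, c) \<le> L_seq q a"
    using L_seq_block[of a q] a by (simp add: phi_Q_def)
qed

lemma inj_on_phi_Q: "inj_on (phi_Q q) (S_Q q)"
proof (rule inj_onI)
  fix s s' assume s: "s \<in> S_Q q" and s': "s' \<in> S_Q q" and e: "phi_Q q s = phi_Q q s'"
  obtain a b c a' b' c' where abc: "s = (a, b, c)" "s' = (a', b', c')"
    by (cases s, cases s')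
  have bounds: "1 \<le> a" "1 \<le> b" "1 \<le> c" "c \<le> a" "1 \<le> a'" "1 \<le> b'" "1 \<le> c'" "c' \<le> a'"
    using s s' abc by (auto simp: S_Q_def)
  have "a \<le> a'" "a' \<le> a"
    using block_index_le phi_Q_block[of a b c q] phi_Q_block[of a' b' c' q] s s' e abc bounds
    by metis+
  then have "a' = a" by simp
  then have eq: "(b - 1) * a + (c - 1) = (b' - 1) * a + (c' - 1)"
    using e abc bounds by (simp add: phi_Q_def)
  have "c - 1 < a" "c' - 1 < a" using bounds \<open>a' = a\<close> by auto
  then have "b - 1 = b' - 1" "c - 1 = c' - 1"
    using arg_cong[OF eq, of "\<lambda>x. x div a"] arg_cong[OF eq, of "\<lambda>x. x mod a"] by simp_all
  with abc bounds \<open>a' = a\<close> show "s = s'" by auto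
qed

lemma phi_Q_inv_phi_Q: "s \<in> S_Q q \<Longrightarrow> phi_Q_inv q (phi_Q q s) = s"
  unfolding phi_Q_inv_def by (rule the_equality) (auto dest: inj_onD[OF inj_on_phi_Q])

lemma y_F_phi_Q:
  assumes "Q_special q F" "(a, b, c) \<in> S_Q q"
  shows "0 \<le> y_F q F (phi_Q q (a, b, c))"
    and "\<bar>y_F q F (phi_Q q (a, b, c)) - (real c - 1) / real a\<bar> \<le> 1 / (2 * real a ^ 2)"
proof -
  have y: "y_F q F (phi_Q q (a, b, c)) = real_of_int (F (a, b, c)) / real_of_int (q (phi_Q q (a, b, c)))"
    using phi_Q_inv_phi_Q[OF assms(2)] by (simp add: y_F_def E_F_def)
  have a: "real a \<ge> 1" "c \<ge> 1" using assms(2) by (auto simp: S_Q_def)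
  have "0 \<le> y_F q F (phi_Q q (a, b, c)) \<and>
    \<bar>y_F q F (phi_Q q (a, b, c)) - (real c - 1) / real a\<bar> \<le> 1 / (2 * real a ^ 2)"
  proof (cases "c = 1")
    case True
    then show ?thesis using assms y unfolding Q_special_def by auto
  next
    case False
    then have I: "y_F q F (phi_Q q (a, b, c)) \<in> {(real c - 1) / real a - 1 / (2 * real a ^ 2) ..
        (real c - 1) / real a + 1 / (2 * real a ^ 2)}"
      using assms y a unfolding Q_special_def by auto
    have "1 / (2 * real a ^ 2) \<le> 1 / real a" using a by (simp add: field_simps power2_eq_square)
    also have "\<dots> \<le> (real c - 1) / real a" using False a by (intro divide_right_mono) auto
    finally show ?thesis using I by (auto simp: abs_le_iff)
  qed
  then show "0 \<le> y_F q F (phi_Q q (a, b, c))"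
    "\<bar>y_F q F (phi_Q q (a, b, c)) - (real c - 1) / real a\<bar> \<le> 1 / (2 * real a ^ 2)"
    by simp_all
qed

section \<open>Local discrepancy\<close>

definition local_discrepancy :: "(nat \<Rightarrow> real) \<Rightarrow> real \<Rightarrow> nat \<Rightarrow> real" where
  "local_discrepancy w \<gamma> n = real (card {k \<in> {1..n}. w k \<in> {0..<\<gamma>}}) - real n * \<gamma>"

lemma card_filter_atLeastAtMost_add:
  fixes m r :: nat
  shows  "card {k \<in> {1..m + r}. P k} = card {k \<in> {1..m}. P k} + card {c \<in> {1..r}. P (m + c)}"
proof -
  have "{k \<in> {1..m + r}. P k} = {k \<in> {1..m}. P k} \<union> (\<lambda>c. m + c) ` {c \<in> {1..r}. P (m + c)}"
  proof (rule set_eqI, rule iffI)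
    fix k assume "k \<in> {k \<in> {1..m + r}. P k}"
    then show "k \<in> {k \<in> {1..m}. P k} \<union> (\<lambda>c. m + c) ` {c \<in> {1..r}. P (m + c)}"
      by (cases "k \<le> m") (auto intro!: image_eqI[of _ _ "k - m"])
  qed auto
  moreover have "card ({k \<in> {1..m}. P k} \<union> (\<lambda>c. m + c) ` {c \<in> {1..r}. P (m + c)})
      = card {k \<in> {1..m}. P k} + card ((\<lambda>c. m + c) ` {c \<in> {1..r}. P (m + c)})"
    by (rule card_Un_disjoint) auto
  moreover have "card ((\<lambda>c. m + c) ` {c \<in> {1..r}. P (m + c)}) = card {c \<in> {1..r}. P (m + c)}"
    by (rule card_image) (auto simp: inj_on_def)
  ultimately show ?thesis by simp
qed

lemma local_discrepancy_add:
  "local_discrepancy w \<gamma> (m + r) = local_discrepancy w \<gamma> m + local_discrepancy (\<lambda>c. w (m + c)) \<gamma> r"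
  unfolding local_discrepancy_def card_filter_atLeastAtMost_add by (simp add: algebra_simps)

lemma abs_local_discrepancy_le:
  assumes "0 \<le> \<gamma>" "\<gamma> \<le> 1"
  shows "\<bar>local_discrepancy w \<gamma> n\<bar> \<le> real n"
proof -
  have "card {k \<in> {1..n}. w k \<in> {0..<\<gamma>}} \<le> card {1..n}"
    by (rule card_mono) auto
  then have "real (card {k \<in> {1..n}. w k \<in> {0..<\<gamma>}}) \<le> real n" by simp
  moreover have "0 \<le> real n * \<gamma>" "real n * \<gamma> \<le> real n"
    using assms by (simp_all add: mult_left_le)
  ultimately show ?thesis unfolding local_discrepancy_def by (simp add: abs_le_iff)
qed

lemma star_discrepancy_le:
  assumes "n > 0" "\<And>\<gamma>. 0 < \<gamma> \<Longrightarrow> \<gamma> \<le> 1 \<Longrightarrow> \<bar>local_discrepancy w \<gamma> n\<bar> \<le> B"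
  shows "star_discrepancy w n \<le> B / real n"
  unfolding star_discrepancy_def
proof (rule cSUP_least)
  fix \<gamma> :: real assume "\<gamma> \<in> {0<..1}"
  then have "\<bar>local_discrepancy w \<gamma> n\<bar> / real n \<le> B / real n"
    using assms by (intro divide_right_mono) auto
  moreover have "real (card {k \<in> {1..n}. w k \<in> {0..<\<gamma>}}) / real n - \<gamma> = local_discrepancy w \<gamma> n / real n"
    using assms(1) by (simp add: local_discrepancy_def field_simps)
  ultimately show "\<bar>real (card {k \<in> {1..n}. w k \<in> {0..<\<gamma>}}) / real n - \<gamma>\<bar> \<le> B / real n"
    by simp
qed simp

lemma card_initial_segment: "card {c \<in> {1..a}. real c - 1 < x} = min a (nat \<lceil>x\<rceil>)"
proof -
  have "{c \<in> {1..a}. real c - 1 < x} = {1..min a (nat \<lceil>x\<rceil>)}"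
    by (auto simp: le_nat_iff ceiling_less_iff less_ceiling_iff) linarith+
  then show ?thesis by simp
qed

lemma abs_local_discrepancy_pattern:
  fixes x :: "nat \<Rightarrow> real"
  assumes a: "a \<ge> 1" and "0 \<le> \<gamma>" "\<gamma> \<le> 1"
    and nonneg: "\<And>c. c \<in> {1..a} \<Longrightarrow> 0 \<le> x c"
    and near: "\<And>c. c \<in> {1..a} \<Longrightarrow> \<bar>x c - (real c - 1) / real a\<bar> \<le> 1 / (2 * real a ^ 2)"
  shows "\<bar>local_discrepancy x \<gamma> a\<bar> \<le> 2"
proof -
  define S where "S = {c \<in> {1..a}. x c \<in> {0..<\<gamma>}}"
  define \<delta> where "\<delta> = 1 / (2 * real a)"
  have \<delta>: "0 \<le> \<delta>" "\<delta> \<le> 1 / 2" using a by (auto simp: \<delta>_def field_simps)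
  have scaled: "\<bar>real a * x c - (real c - 1)\<bar> \<le> \<delta>" if "c \<in> {1..a}" for c
  proof -
    have "\<bar>real a * x c - (real c - 1)\<bar> = real a * \<bar>x c - (real c - 1) / real a\<bar>"
      using a by (simp add: abs_mult field_simps)
    also have "\<dots> \<le> real a * (1 / (2 * real a ^ 2))" using near[OF that] by (intro mult_left_mono) auto
    also have "\<dots> = \<delta>" using a by (simp add: \<delta>_def power2_eq_square)
    finally show ?thesis .
  qed
  have "S \<subseteq> {c \<in> {1..a}. real c - 1 < real a * \<gamma> + \<delta>}"
  proof
    fix c assume "c \<in> S"
    then have c: "c \<in> {1..a}" "real a * x c < real a * \<gamma>" using a by (auto simp: S_def)
    moreover have "real c - 1 - real a * x c \<le> \<delta>" using scaled[OF c(1)] by (simp add: abs_le_iff)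
    ultimately have "real c - 1 < real a * \<gamma> + \<delta>" by linarith
    with c(1) show "c \<in> {c \<in> {1..a}. real c - 1 < real a * \<gamma> + \<delta>}" by simp
  qed
  then have "card S \<le> min a (nat \<lceil>real a * \<gamma> + \<delta>\<rceil>)"
    using card_initial_segment card_mono[of "{c \<in> {1..a}. real c - 1 < real a * \<gamma> + \<delta>}" S] by simp
  then have "real (card S) \<le> real (nat \<lceil>real a * \<gamma> + \<delta>\<rceil>)" by simp
  also have "\<dots> \<le> real a * \<gamma> + \<delta> + 1"
    using \<delta> assms(2) by (simp add: of_nat_nat)
  finally have upper: "real (card S) \<le> real a * \<gamma> + \<delta> + 1" .
  have "{c \<in> {1..a}. real c - 1 < real a * \<gamma> - \<delta>} \<subseteq> S"
  proof
    fix c assume "c \<in> {c \<in> {1..a}. real c - 1 < real a * \<gamma> - \<delta>}"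
    then have c: "c \<in> {1..a}" "real c - 1 < real a * \<gamma> - \<delta>" by auto
    moreover have "real a * x c - (real c - 1) \<le> \<delta>" using scaled[OF c(1)] by (simp add: abs_le_iff)
    ultimately have "real a * x c < real a * \<gamma>" by linarith
    then show "c \<in> S" using a c(1) nonneg[OF c(1)] by (simp add: S_def)
  qed
  then have "min a (nat \<lceil>real a * \<gamma> - \<delta>\<rceil>) \<le> card S"
    using card_initial_segment card_mono[of S "{c \<in> {1..a}. real c - 1 < real a * \<gamma> - \<delta>}"]
    by (simp add: S_def)
  moreover have "real a * \<gamma> \<le> real a" using assms by (simp add: mult_left_le)
  ultimately have lower: "real a * \<gamma> - \<delta> \<le> real (card S)"
    using \<delta> by linarith
  show ?thesis using upper lower \<delta> by (simp add: local_discrepancy_def S_def abs_le_iff)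
qed

lemma local_discrepancy_y_F_run:
  assumes Q: "Q_special q F" and \<gamma>: "0 \<le> \<gamma>" "\<gamma> \<le> 1" and a: "a \<ge> 1" "b < l_seq q a"
  shows "\<bar>local_discrepancy (\<lambda>c. y_F q F (L_seq q (a - 1) + b * a + c)) \<gamma> a\<bar> \<le> 2"
proof -
  have run: "L_seq q (a - 1) + b * a + c = phi_Q q (a, Suc b, c)"
    and S: "(a, Suc b, c) \<in> S_Q q" if "c \<in> {1..a}" for c
    using that a by (auto simp: phi_Q_def S_Q_def)
  show ?thesis
  proof (rule abs_local_discrepancy_pattern[OF a(1) \<gamma>])
    fix c assume c: "c \<in> {1..a}"
    show "0 \<le> y_F q F (L_seq q (a - 1) + b * a + c)"
      unfolding run[OF c] by (rule y_F_phi_Q(1)[OF Q S[OF c]])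
    show "\<bar>y_F q F (L_seq q (a - 1) + b * a + c) - (real c - 1) / real a\<bar> \<le> 1 / (2 * real a ^ 2)"
      unfolding run[OF c] by (rule y_F_phi_Q(2)[OF Q S[OF c]])
  qed
qed

lemma local_discrepancy_y_F_runs:
  assumes Q: "Q_special q F" and \<gamma>: "0 \<le> \<gamma>" "\<gamma> \<le> 1" and a: "a \<ge> 1"
  shows "b \<le> l_seq q a \<Longrightarrow> \<bar>local_discrepancy (y_F q F) \<gamma> (L_seq q (a - 1) + b * a)\<bar>
           \<le> \<bar>local_discrepancy (y_F q F) \<gamma> (L_seq q (a - 1))\<bar> + 2 * real b"
proof (induction b)
  case (Suc b)
  have "L_seq q (a - 1) + Suc b * a = (L_seq q (a - 1) + b * a) + a" by simp
  then have "\<bar>local_discrepancy (y_F q F) \<gamma> (L_seq q (a - 1) + Suc b * a)\<bar>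
      \<le> \<bar>local_discrepancy (y_F q F) \<gamma> (L_seq q (a - 1) + b * a)\<bar>
        + \<bar>local_discrepancy (\<lambda>c. y_F q F (L_seq q (a - 1) + b * a + c)) \<gamma> a\<bar>"
    by (simp only: local_discrepancy_add abs_triangle_ineq)
  moreover have "\<bar>local_discrepancy (\<lambda>c. y_F q F (L_seq q (a - 1) + b * a + c)) \<gamma> a\<bar> \<le> 2"
    using Suc.prems by (intro local_discrepancy_y_F_run[OF Q \<gamma> a]) simp
  ultimately show ?case using Suc by fastforce
qed simp

lemma local_discrepancy_y_F_blocks:
  assumes Q: "Q_special q F" and \<gamma>: "0 \<le> \<gamma>" "\<gamma> \<le> 1"
  shows "\<bar>local_discrepancy (y_F q F) \<gamma> (L_seq q a)\<bar> \<le> 2 * (\<Sum>j\<in>{1..a}. real (l_seq q j))"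
proof (induction a)
  case 0
  then show ?case by (simp add: local_discrepancy_def)
next
  case (Suc a)
  have "L_seq q (Suc a) = L_seq q (Suc a - 1) + l_seq q (Suc a) * Suc a"
    by (simp add: L_seq_Suc)
  then show ?case
    using local_discrepancy_y_F_runs[OF Q \<gamma>, of "Suc a" "l_seq q (Suc a)"] Suc by simp
qed

lemma local_discrepancy_y_F_le:
  assumes Q: "Q_special q F" and \<gamma>: "0 \<le> \<gamma>" "\<gamma> \<le> 1"
    and a: "a \<ge> 1" and n: "L_seq q (a - 1) < n" "n \<le> L_seq q a"
  shows "\<bar>local_discrepancy (y_F q F) \<gamma> n\<bar> \<le> 2 * (\<Sum>j\<in>{1..a}. real (l_seq q j)) + real a"
proof -
  define b where "b = (n - L_seq q (a - 1)) div a"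
  define r where "r = (n - L_seq q (a - 1)) mod a"
  have n_eq: "n = (L_seq q (a - 1) + b * a) + r" and "r < a"
    using n a unfolding b_def r_def by simp_all
  have "a * b + r \<le> a * l_seq q a"
    using n_eq n L_seq_block[OF a, of q] by (simp add: mult.commute)
  then have "a * b \<le> a * l_seq q a" by linarith
  then have "b \<le> l_seq q a" using a by simp
  have "\<bar>local_discrepancy (y_F q F) \<gamma> n\<bar> \<le> \<bar>local_discrepancy (y_F q F) \<gamma> (L_seq q (a - 1) + b * a)\<bar>
      + \<bar>local_discrepancy (\<lambda>c. y_F q F (L_seq q (a - 1) + b * a + c)) \<gamma> r\<bar>"
    unfolding n_eq local_discrepancy_add by (rule abs_triangle_ineq)
  also have "\<dots> \<le> 2 * (\<Sum>j\<in>{1..a - 1}. real (l_seq q j)) + 2 * real (l_seq q a) + real a"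
    using local_discrepancy_y_F_runs[OF Q \<gamma> a \<open>b \<le> l_seq q a\<close>]
      local_discrepancy_y_F_blocks[OF Q \<gamma>, of "a - 1"]
      abs_local_discrepancy_le[OF \<gamma>, of "\<lambda>c. y_F q F (L_seq q (a - 1) + b * a + c)" r]
      \<open>b \<le> l_seq q a\<close> \<open>r < a\<close>
    by (simp add: of_nat_mono)
  also have "\<dots> = 2 * (\<Sum>j\<in>{1..a}. real (l_seq q j)) + real a"
    using a by (cases a) (simp_all add: sum.cl_ivl_Suc)
  finally show ?thesis .
qed

section \<open>Growth of the block multiplicities\<close>

lemma nu_spec:
  assumes "infinite_in_limit q"
  shows "nu q j \<ge> 1 \<and> (\<forall>m\<ge>nu q j. q m \<ge> 2 * int j ^ 2)"
proof -
  have "eventually (\<lambda>m. 2 * int j ^ 2 \<le> q m) sequentially"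
    using assms unfolding infinite_in_limit_def filterlim_at_top by blast
  then obtain N where "\<forall>m\<ge>N. 2 * int j ^ 2 \<le> q m" by (auto simp: eventually_sequentially)
  then have "max N 1 \<ge> 1 \<and> (\<forall>m\<ge>max N 1. q m \<ge> 2 * int j ^ 2)" by simp
  then show ?thesis unfolding nu_def by (rule LeastI)
qed

lemma incseq_nu:
  assumes "infinite_in_limit q"
  shows "incseq (nu q)"
proof (rule incseq_SucI)
  fix j
  have "2 * int j ^ 2 \<le> 2 * int (Suc j) ^ 2" by (simp add: power_mono)
  then have "nu q (Suc j) \<ge> 1 \<and> (\<forall>m\<ge>nu q (Suc j). q m \<ge> 2 * int j ^ 2)"
    using nu_spec[OF assms, of "Suc j"] by (meson order_trans)
  then show "nu q j \<le> nu q (Suc j)" unfolding nu_def[of q j] by (rule Least_le)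
qed

lemma l_seq_Suc_spec:
  assumes "i \<ge> 1"
  shows "nu q (Suc (Suc i)) - 1 \<le> L_seq q (Suc i)"
    and "l_seq q (Suc i) \<ge> 2 \<Longrightarrow> L_seq q i + Suc i * (l_seq q (Suc i) - 1) < nu q (Suc (Suc i)) - 1"
proof -
  define P where "P k \<longleftrightarrow> k \<ge> 1 \<and> nu q (Suc (Suc i)) - 1 \<le> L_seq q i + Suc i * k" for k
  have "P (Suc (nu q (Suc (Suc i))))" unfolding P_def by simp
  then have "P (Least P)" by (rule LeastI)
  moreover have l: "l_seq q (Suc i) = Least P"
    using assms \<open>P (Least P)\<close> by (simp add: l_seq_Suc P_def[abs_def])
  ultimately show "nu q (Suc (Suc i)) - 1 \<le> L_seq q (Suc i)"
    by (simp add: L_seq_Suc P_def)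
  assume "l_seq q (Suc i) \<ge> 2"
  then have "\<not> P (l_seq q (Suc i) - 1)" unfolding l by (intro not_less_Least) simp
  with \<open>l_seq q (Suc i) \<ge> 2\<close> show "L_seq q i + Suc i * (l_seq q (Suc i) - 1) < nu q (Suc (Suc i)) - 1"
    unfolding P_def by linarith
qed

lemma L_seq_ge_nu: "i \<ge> 1 \<Longrightarrow> nu q (Suc i) - 1 \<le> L_seq q i"
proof (cases i)
  case (Suc j)
  then show ?thesis
    using l_seq_Suc_spec(1)[of j q] by (cases "j = 0") (simp_all add: L_seq_Suc l_seq_Suc numeral_2_eq_2)
qed simp

text \<open>Minimality of \<open>l\<^sub>i\<^sub>+\<^sub>1\<close> together with \<open>L\<^sub>i \<ge> \<nu>\<^sub>i\<^sub>+\<^sub>1 - 1\<close> gives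
  \<open>(i + 1)(l\<^sub>i\<^sub>+\<^sub>1 - 1) < \<nu>\<^sub>i\<^sub>+\<^sub>2 - \<nu>\<^sub>i\<^sub>+\<^sub>1\<close>.\<close>

lemma l_seq_Suc_le:
  assumes "i \<ge> 1" and growth: "real (nu q (Suc (Suc i))) - real (nu q (Suc i)) \<le> M * real (Suc i)"
  shows "real (l_seq q (Suc i)) \<le> max 1 (M + 1)"
proof (cases "l_seq q (Suc i) \<ge> 2")
  case True
  have "L_seq q i + Suc i * (l_seq q (Suc i) - 1) + 1 < nu q (Suc (Suc i))"
    using l_seq_Suc_spec(2)[OF assms(1) True] by linarith
  moreover have "nu q (Suc i) \<le> L_seq q i + 1"
    using L_seq_ge_nu[OF assms(1), of q] by linarith
  ultimately have gap: "Suc i * (l_seq q (Suc i) - 1) < nu q (Suc (Suc i)) - nu q (Suc i)"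
    by linarith
  have "real (Suc i) * (real (l_seq q (Suc i)) - 1) = real (Suc i * (l_seq q (Suc i) - 1))"
    using True by (simp only: of_nat_mult of_nat_diff of_nat_1)
  also have "\<dots> < real (nu q (Suc (Suc i)) - nu q (Suc i))"
    using gap by (simp only: of_nat_less_iff)
  also have "\<dots> = real (nu q (Suc (Suc i))) - real (nu q (Suc i))"
    using gap by (simp add: of_nat_diff)
  also have "\<dots> \<le> M * real (Suc i)" by (rule growth)
  finally have "real (Suc i) * (real (l_seq q (Suc i)) - 1) < M * real (Suc i)" .
  then have "real (l_seq q (Suc i)) - 1 < M"
    by (simp add: mult.commute)
  then show ?thesis by simp
qed simp

lemma nonneg_if_incseq_growth_le:
  fixes f :: "nat \<Rightarrow> nat"
  assumes "incseq f" and "\<forall>i::nat. i \<ge> 1 \<and> real i > t \<longrightarrow> real (f (i + 1)) - real (f i) \<le> M * real i"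
  shows "M \<ge> 0"
proof -
  define i where "i = nat \<lceil>t\<rceil> + 1"
  have "i \<ge> 1" "real i > t" unfolding i_def by linarith+
  then have "real (f (i + 1)) - real (f i) \<le> M * real i" using assms(2) by blast
  moreover have "f i \<le> f (i + 1)" using assms(1) by (simp add: incseq_SucD)
  ultimately have "0 \<le> M * real i" by linarith
  with \<open>i \<ge> 1\<close> show ?thesis by (simp add: zero_le_mult_iff)
qed

lemma eventually_l_seq_le:
  assumes "infinite_in_limit q"
    and growth: "\<forall>i::nat. i \<ge> 1 \<and> real i > t \<longrightarrow> real (nu q (i + 1)) - real (nu q i) \<le> M * real i"
  shows "eventually (\<lambda>j. real (l_seq q j) \<le> M + 1) sequentially"
  unfolding eventually_sequentially
proof (intro exI allI impI)
  fix j assume j: "nat \<lceil>t\<rceil> + 2 \<le> j"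
  then obtain i where i: "j = Suc i" "i \<ge> 1" "real (Suc i) > t"
    by (cases j) (auto, linarith)
  have "M \<ge> 0" by (rule nonneg_if_incseq_growth_le[OF incseq_nu[OF assms(1)] growth])
  moreover have "real (l_seq q (Suc i)) \<le> max 1 (M + 1)"
    using i growth by (intro l_seq_Suc_le) auto
  ultimately show "real (l_seq q j) \<le> M + 1" using i by simp
qed

lemma sum_le_linear_if_eventually_le:
  fixes f :: "nat \<Rightarrow> real"
  assumes "eventually (\<lambda>j. f j \<le> K) sequentially" and "K \<ge> 0"
  obtains C where "\<And>a. (\<Sum>j\<in>{1..a}. f j) \<le> C + K * real a"
proof -
  obtain j0 where j0: "\<And>j. j \<ge> j0 \<Longrightarrow> f j \<le> K"
    using assms(1) by (auto simp: eventually_sequentially)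
  have "(\<Sum>j\<in>{1..a}. f j) \<le> (\<Sum>j<j0. \<bar>f j\<bar>) + K * real a" for a
  proof -
    have "(\<Sum>j\<in>{1..a}. f j) \<le> (\<Sum>j\<in>{1..a}. (if j \<in> {..<j0} then \<bar>f j\<bar> else 0) + K)"
      using j0 assms(2) by (intro sum_mono) (auto simp: not_less)
    also have "\<dots> = (\<Sum>j\<in>{1..a} \<inter> {..<j0}. \<bar>f j\<bar>) + K * real a"
      by (simp add: sum.distrib sum.inter_restrict)
    also have "(\<Sum>j\<in>{1..a} \<inter> {..<j0}. \<bar>f j\<bar>) \<le> (\<Sum>j<j0. \<bar>f j\<bar>)"
      by (rule sum_mono2) auto
    finally show ?thesis by simp
  qed
  then show thesis by (rule that)
qed

section \<open>The discrepancy bound\<close>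

lemma star_discrepancy_y_F_le:
  assumes Q: "Q_special q F" and C: "\<And>a. (\<Sum>j\<in>{1..a}. real (l_seq q j)) \<le> C + K * real a"
    and "K \<ge> 0" "n \<ge> 1"
  shows "star_discrepancy (y_F q F) n \<le> ((2 * K + 1) * sqrt 2 * sqrt (real n) + (2 * C + 2 * K + 1)) / real n"
proof (rule star_discrepancy_le)
  fix \<gamma> :: real assume \<gamma>: "0 < \<gamma>" "\<gamma> \<le> 1"
  obtain a where a: "a \<ge> 1" "L_seq q (a - 1) < n" "n \<le> L_seq q a"
    using block_exists[OF \<open>n \<ge> 1\<close>] by blast
  have "\<bar>local_discrepancy (y_F q F) \<gamma> n\<bar> \<le> 2 * (\<Sum>j\<in>{1..a}. real (l_seq q j)) + real a"
    using \<gamma> by (intro local_discrepancy_y_F_le[OF Q _ _ a]) auto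
  also have "\<dots> \<le> (2 * K + 1) * real a + 2 * C"
    using C[of a] by (simp add: algebra_simps)
  also have "\<dots> \<le> (2 * K + 1) * (sqrt 2 * sqrt (real n) + 1) + 2 * C"
    using block_index_le_sqrt[OF a(1,2)] \<open>K \<ge> 0\<close> by (intro add_right_mono mult_left_mono) auto
  also have "\<dots> = (2 * K + 1) * sqrt 2 * sqrt (real n) + (2 * C + 2 * K + 1)"
    by (simp add: algebra_simps)
  finally show "\<bar>local_discrepancy (y_F q F) \<gamma> n\<bar> \<le> \<dots>" .
qed (use \<open>n \<ge> 1\<close> in simp)

lemma eventually_affine_sqrt_less:
  fixes c \<psi> A :: real
  assumes "c > 0" "\<psi> > 1"
  shows "eventually (\<lambda>n. (c * sqrt (real n) + A) / real n < \<psi> * c * real n powr (-1/2)) sequentially"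
proof -
  have "filterlim (\<lambda>n. sqrt (real n)) at_top sequentially"
    by (rule filterlim_compose[OF sqrt_at_top filterlim_real_sequentially])
  then have "eventually (\<lambda>n. A / ((\<psi> - 1) * c) < sqrt (real n)) sequentially"
    by (simp add: filterlim_at_top_dense)
  with eventually_gt_at_top[of 0] show ?thesis
  proof eventually_elim
    case (elim n)
    then have "A < (\<psi> - 1) * c * sqrt (real n)"
      using assms by (simp add: divide_less_eq mult.commute)
    then have "c * sqrt (real n) + A < \<psi> * c * sqrt (real n)"
      by (simp add: algebra_simps)
    then have "(c * sqrt (real n) + A) / real n < \<psi> * c * (sqrt (real n) / real n)"
      using elim by (simp add: divide_strict_right_mono)
    also have "sqrt (real n) / real n = real n powr (-1/2)"
      using elim by (simp add: powr_minus powr_half_sqrt field_simps flip: real_sqrt_mult)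
    finally show ?case .
  qed
qed

theorem mainTheorem5:
  fixes q :: "nat \<Rightarrow> int" and M t :: real
    and F :: "nat \<times> nat \<times> nat \<Rightarrow> int" and \<psi> :: real
  assumes "basic_seq q"
    and "infinite_in_limit q"
    and "\<forall>i::nat. i \<ge> 1 \<and> real i > t \<longrightarrow> real (nu q (i + 1)) - real (nu q i) \<le> M * real i"
    and "Q_special q F"
    and "\<psi> > 1"
  shows "eventually (\<lambda>n. star_discrepancy (y_F q F) n
           < \<psi> * sqrt (2 * real_of_int \<lceil>M + 1\<rceil>) * (2 * real_of_int \<lceil>M + 1\<rceil> + 1)
             * real n powr (-1/2)) sequentially"
proof -
  have "M \<ge> 0" by (rule nonneg_if_incseq_growth_le[OF incseq_nu[OF assms(2)] assms(3)])
  obtain C where C: "\<And>a. (\<Sum>j\<in>{1..a}. real (l_seq q j)) \<le> C + (M + 1) * real a"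
    using sum_le_linear_if_eventually_le[OF eventually_l_seq_le[OF assms(2,3)]] \<open>M \<ge> 0\<close> by force
  define c where "c = (2 * (M + 1) + 1) * sqrt 2"
  define K where "K = real_of_int \<lceil>M + 1\<rceil>"
  have "c > 0" using \<open>M \<ge> 0\<close> by (simp add: c_def)
  have "2 * (M + 1) + 1 \<le> 2 * K + 1" "sqrt 2 \<le> sqrt (2 * K)" "0 \<le> sqrt 2"
    using \<open>M \<ge> 0\<close> by (auto simp: K_def)
  then have slack: "\<psi> * c \<le> \<psi> * sqrt (2 * K) * (2 * K + 1)"
    using \<open>M \<ge> 0\<close> assms(5) unfolding c_def mult.assoc
    by (intro mult_left_mono) (simp_all add: mult.commute mult_mono)
  show ?thesis
    using eventually_affine_sqrt_less[OF \<open>c > 0\<close> assms(5), of "2 * C + 2 * (M + 1) + 1"]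
      eventually_ge_at_top[of 1]
  proof eventually_elim
    case (elim n)
    have "star_discrepancy (y_F q F) n \<le> (c * sqrt (real n) + (2 * C + 2 * (M + 1) + 1)) / real n"
      using star_discrepancy_y_F_le[OF assms(4) C _ \<open>n \<ge> 1\<close>] \<open>M \<ge> 0\<close> by (simp add: c_def)
    also have "\<dots> < \<psi> * c * real n powr (-1/2)" by (rule elim(1))
    also have "\<dots> \<le> \<psi> * sqrt (2 * K) * (2 * K + 1) * real n powr (-1/2)"
      using slack by (simp add: mult_right_mono)
    finally show ?case unfolding K_def .
  qed
qed

end
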